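(* Let $\delta>0$ and $q>5+\delta$. There is a constant $C_{\delta,q}>0$ depending only on $\delta$ and $q$ such that for every nonnegative measurable $f$ on $\mathbb{T}^3\times\mathbb{R}^3\times\mathbb{R}^+$ with $0<\|f\|_{L^\infty_q}<\infty$, at every point $x$ where $\rho(x)>0$, $$\rho\,(T_\delta+|U|^2)^{\frac{q-\delta-3}{2}}\ \le\ C_{\delta,q}\,\|f\|_{L^\infty_q}.$$
   Context: Fix $\delta>0$. For a nonnegative measurable function $f=f(x,v,I)$ on $\mathbb{T}^3\times\mathbb{R}^3\times\mathbb{R}^+$ define at each $x$ the macroscopic fields $\rho=\int_{\mathbb{R}^3\times\mathbb{R}^+}f\,dv\,dI$, $U=\rho^{-1}\int vf\,dv\,dI$, the translational temperature $T_{tr}$ by $\frac32\rho T_{tr}=\int\frac12|v-U|^2 f\,dv\,dI$, the non-translational temperature $T_{I,\delta}$ by $\frac{\delta}{2}\rho T_{I,\delta}=\int I^{2/\delta}f\,dv\,dI$, and the temperature $T_\delta=\frac{3}{3+\delta}T_{tr}+\frac{\delta}{3+\delta}T_{I,\delta}$ (equivalently $\frac{3+\delta}{2}\rho T_\delta=\int(\frac12|v-U|^2+I^{2/\delta})f\,dv\,dI$). The weighted norm is $\|f\|_{L^\infty_q}=\operatorname{ess\,sup}_{x,v,I}|f(x,v,I)|(1+|v|^2+I^{2/\delta})^{q/2}$. *)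

theory Defs
  imports "HOL-Analysis.Analysis" "HOL-Probability.Essential_Supremum"
begin

text \<open>The torus T^3 is represented by the fundamental domain [0,1)^3 in real^3 with
  Lebesgue measure; velocity v :: real^3; internal energy variable I > 0.
  A distribution function is f :: real^3 => real^3 => real => real, f x v I.\<close>

definition torus :: "(real^3) set" where
  "torus = {x. \<forall>i. 0 \<le> x $ i \<and> x $ i < 1}"

definition torus_measure :: "(real^3) measure" where
  "torus_measure = restrict_space lborel torus"

definition vI_measure :: "((real^3) \<times> real) measure" where
  "vI_measure = restrict_space lborel (UNIV \<times> {0<..})"

definition phase_measure :: "((real^3) \<times> (real^3) \<times> real) measure" where
  "phase_measure = restrict_space lborel (torus \<times> UNIV \<times> {0<..})"

definition Lq_norm :: "real \<Rightarrow> real \<Rightarrow> (real^3 \<Rightarrow> real^3 \<Rightarrow> real \<Rightarrow> real) \<Rightarrow> ereal" where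
  "Lq_norm \<delta> q f = esssup phase_measure
     (\<lambda>(x, v, I). ereal (\<bar>f x v I\<bar> * (1 + (norm v)\<^sup>2 + I powr (2 / \<delta>)) powr (q / 2)))"

definition dens :: "(real^3 \<Rightarrow> real^3 \<Rightarrow> real \<Rightarrow> real) \<Rightarrow> real^3 \<Rightarrow> real" where
  "dens f x = (\<integral>(v, I). f x v I \<partial>vI_measure)"

definition bulk_vel :: "(real^3 \<Rightarrow> real^3 \<Rightarrow> real \<Rightarrow> real) \<Rightarrow> real^3 \<Rightarrow> real^3" where
  "bulk_vel f x = (1 / dens f x) *\<^sub>R (\<integral>(v, I). f x v I *\<^sub>R v \<partial>vI_measure)"

definition temp :: "real \<Rightarrow> (real^3 \<Rightarrow> real^3 \<Rightarrow> real \<Rightarrow> real) \<Rightarrow> real^3 \<Rightarrow> real" where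
  "temp \<delta> f x = (2 / ((3 + \<delta>) * dens f x)) *
     (\<integral>(v, I). ((norm (v - bulk_vel f x))\<^sup>2 / 2 + I powr (2 / \<delta>)) * f x v I \<partial>vI_measure)"

end

theory Submission
  imports Defs
begin

text \<open>
  Fix a point x, write w = |v|^2 + I^(2/delta) and N for the weighted norm, so that
  f <= N (1 + w)^(-q/2) on the slice at x. The sublevel set {w <= r^2} is contained in a ball of
  radius r times an interval of length r^delta, so a dyadic decomposition gives
  integral of w^(1-q/2) over {w > R^2} <= K R^(5+delta-q), which converges because q > 5 + delta.
  Splitting the energy moment at w = R^2 then bounds it by R^2 rho + K N R^(5+delta-q), and the
  radius with R^(q-delta-3) = N/rho makes both terms comparable to R^2 rho. Consequently
  |U| <= |v|-moment / rho <= R/2 + (energy moment)/(2 R rho) is of order R, the temperature is of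
  order R^2 + |U|^2, and rho (T + |U|^2)^((q-delta-3)/2) <= C rho R^(q-delta-3) = C N.
\<close>

section \<open>Sublevel sets of the energy and its tail integral\<close>

definition energy :: "real \<Rightarrow> (real^3) \<times> real \<Rightarrow> real" where
  "energy \<delta> z = (norm (fst z))\<^sup>2 + snd z powr (2 / \<delta>)"

lemma space_vI_measure: "space vI_measure = UNIV \<times> {0<..}"
  by (simp add: vI_measure_def space_restrict_space)

lemma fst_borel_measurable [measurable]: "(fst :: (real^3) \<times> real \<Rightarrow> real^3) \<in> borel_measurable borel"
  by (intro borel_measurable_continuous_onI continuous_intros)

lemma snd_borel_measurable [measurable]: "(snd :: (real^3) \<times> real \<Rightarrow> real) \<in> borel_measurable borel"
  by (intro borel_measurable_continuous_onI continuous_intros)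

lemma vI_domain_sets_lborel: "(UNIV \<times> {0<..} :: ((real^3) \<times> real) set) \<in> sets lborel"
proof -
  have "(UNIV \<times> {0<..} :: ((real^3) \<times> real) set) = {z \<in> space lborel. 0 < snd z}" by auto
  also have "\<dots> \<in> sets lborel" by measurable
  finally show ?thesis .
qed

lemma fst_measurable_vI [measurable]: "fst \<in> borel_measurable vI_measure"
  unfolding vI_measure_def by (intro measurable_restrict_space1) measurable

lemma snd_measurable_vI [measurable]: "snd \<in> borel_measurable vI_measure"
  unfolding vI_measure_def by (intro measurable_restrict_space1) measurable

lemma energy_measurable [measurable]: "energy \<delta> \<in> borel_measurable vI_measure"
  unfolding energy_def by measurable

lemma energy_nonneg: "0 \<le> energy \<delta> z"
  by (simp add: energy_def)

lemma norm_fst_power2_le_energy: "(norm (fst z))\<^sup>2 \<le> energy \<delta> z"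
  by (simp add: energy_def)

lemma power2_powr:
  fixes x :: real
  assumes "x \<ge> 0"
  shows "(x\<^sup>2) powr a = x powr (2 * a)"
proof -
  have "x\<^sup>2 = x powr 2" using assms by simp
  then show ?thesis by (simp only: powr_powr)
qed

lemma energy_sublevel_subset:
  assumes "\<delta> > 0" "r > 0"
  shows "{z \<in> space vI_measure. energy \<delta> z \<le> r\<^sup>2} \<subseteq> cball 0 r \<times> {0..r powr \<delta>}"
proof clarify
  fix v :: "real^3" and I :: real
  assume "(v, I) \<in> space vI_measure" and le: "energy \<delta> (v, I) \<le> r\<^sup>2"
  then have I: "I > 0" by (simp add: space_vI_measure)
  have "(norm v)\<^sup>2 + I powr (2 / \<delta>) \<le> r\<^sup>2"
    using le by (simp add: energy_def)
  moreover have "0 \<le> (norm v)\<^sup>2" "0 \<le> I powr (2 / \<delta>)" by simp_all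
  ultimately have v: "(norm v)\<^sup>2 \<le> r\<^sup>2" and "I powr (2 / \<delta>) \<le> r\<^sup>2" by linarith+
  then have "(I powr (2 / \<delta>)) powr (\<delta> / 2) \<le> (r\<^sup>2) powr (\<delta> / 2)"
    using assms by (intro powr_mono2) auto
  then have "I \<le> r powr \<delta>"
    using assms I by (simp add: powr_powr power2_powr)
  with v I assms show "v \<in> cball 0 r \<and> I \<in> {0..r powr \<delta>}"
    by (simp add: power2_le_iff_abs_le)
qed

lemma emeasure_energy_sublevel_le:
  assumes "\<delta> > 0" "r > 0"
  shows "emeasure vI_measure {z \<in> space vI_measure. energy \<delta> z \<le> r\<^sup>2}
           \<le> ennreal (unit_ball_vol 3 * r powr (3 + \<delta>))"
proof -
  let ?B = "{z \<in> space vI_measure. energy \<delta> z \<le> r\<^sup>2}"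
  have "cball (0::real^3) r \<times> {0..r powr \<delta>} \<in> sets (lborel \<Otimes>\<^sub>M lborel)" by auto
  then have box: "cball (0::real^3) r \<times> {0..r powr \<delta>} \<in> sets lborel" by (simp only: lborel_prod)
  have "emeasure vI_measure ?B = emeasure lborel ?B"
    unfolding vI_measure_def
    by (rule emeasure_restrict_space)
       (use vI_domain_sets_lborel in \<open>auto simp: space_vI_measure[unfolded vI_measure_def]\<close>)
  also have "\<dots> \<le> emeasure lborel (cball (0::real^3) r \<times> {0..r powr \<delta>})"
    using energy_sublevel_subset[of \<delta> r] assms box by (intro emeasure_mono) auto
  also have "\<dots> = emeasure lborel (cball (0::real^3) r) * emeasure lborel {0..r powr \<delta>}"
    by (simp flip: lborel_prod add: lborel.emeasure_pair_measure_Times)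
  also have "\<dots> = ennreal (unit_ball_vol 3 * (r ^ 3 * r powr \<delta>))"
    using assms by (simp add: emeasure_cball ennreal_mult mult.assoc)
  also have "r ^ 3 * r powr \<delta> = r powr (3 + \<delta>)"
    using assms by (simp add: powr_add)
  finally show ?thesis .
qed

lemma ennreal_term_le_suminf: "(f k :: ennreal) \<le> (\<Sum>n. f n)"
  using sum_le_suminf[of f "{k}"] by simp

lemma dyadic_shell_exists:
  fixes R w :: real
  assumes "R > 0" "R\<^sup>2 < w"
  shows "\<exists>k. (2 ^ k * R)\<^sup>2 < w \<and> w \<le> (2 ^ (k + 1) * R)\<^sup>2"
proof -
  let ?P = "\<lambda>n. w \<le> (2 ^ n * R)\<^sup>2"
  obtain n where "w / R\<^sup>2 < 4 ^ n" using real_arch_pow[of 4 "w / R\<^sup>2"] by auto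
  then have "?P n" using assms by (simp add: field_simps power2_eq_square flip: power_mult_distrib[of 2 2])
  then have least: "?P (Least ?P)" by (rule LeastI)
  have below: "\<not> ?P m" if "m < Least ?P" for m using not_less_Least[OF that] .
  obtain k where "Least ?P = k + 1"
    using assms least by (cases "Least ?P") auto
  then show ?thesis using least below[of k] by (intro exI[of _ k]) (auto simp: not_le)
qed

lemma dyadic_weight_eq:
  fixes R :: real
  assumes "R > 0"
  shows "(2 ^ k * R) powr (2 - q) * (2 ^ (k + 1) * R) powr (3 + \<delta>)
           = 2 powr (3 + \<delta>) * R powr (5 + \<delta> - q) * (2 powr (5 + \<delta> - q)) ^ k"
proof -
  have "(2 ^ (k + 1) * R) powr (3 + \<delta>) = 2 powr (3 + \<delta>) * (2 ^ k * R) powr (3 + \<delta>)"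
    by (simp add: powr_mult mult.assoc)
  moreover have "(2 ^ k * R) powr (2 - q) * (2 ^ k * R) powr (3 + \<delta>) = (2 ^ k * R) powr (5 + \<delta> - q)"
    by (simp add: add_diff_eq flip: powr_add)
  moreover have "(2 ^ k * R) powr (5 + \<delta> - q) = (2 powr (5 + \<delta> - q)) ^ k * R powr (5 + \<delta> - q)"
    using assms by (simp add: powr_mult powr_power powr_powr mult.commute flip: powr_realpow)
  ultimately show ?thesis by (simp add: mult_ac)
qed

definition tail_const :: "real \<Rightarrow> real \<Rightarrow> real" where
  "tail_const \<delta> q = unit_ball_vol 3 * 2 powr (3 + \<delta>) / (1 - 2 powr (5 + \<delta> - q))"

lemma nn_integral_energy_tail_le:
  assumes "\<delta> > 0" "q > 5 + \<delta>" "R > 0"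
  shows "(\<integral>\<^sup>+z. ennreal (indicator {z. R\<^sup>2 < energy \<delta> z} z * energy \<delta> z powr (1 - q / 2)) \<partial>vI_measure)
           \<le> ennreal (tail_const \<delta> q * R powr (5 + \<delta> - q))"
proof -
  define c where "c k = (2 ^ k * R) powr (2 - q)" for k :: nat
  define B where "B k = {z \<in> space vI_measure. energy \<delta> z \<le> (2 ^ (k + 1) * R)\<^sup>2}" for k :: nat
  define a where "a = unit_ball_vol 3 * 2 powr (3 + \<delta>) * R powr (5 + \<delta> - q)"
  define \<theta> where "\<theta> = (2::real) powr (5 + \<delta> - q)"
  have "\<theta> < 2 powr 0" unfolding \<theta>_def using assms by (intro powr_less_mono) auto
  then have \<theta>: "0 < \<theta>" "\<theta> < 1" by (simp_all add: \<theta>_def)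
  have a: "a > 0" using assms by (simp add: a_def)
  have B_sets [measurable]: "B k \<in> sets vI_measure" for k unfolding B_def by measurable
  txt \<open>On the shell (2^k R)^2 < w <= (2^(k+1) R)^2 the integrand is at most c k, and the shell
    lies in the sublevel set B k.\<close>
  have dyadic: "ennreal (indicator {z. R\<^sup>2 < energy \<delta> z} z * energy \<delta> z powr (1 - q / 2))
       \<le> (\<Sum>k. ennreal (c k) * indicator (B k) z)" if z: "z \<in> space vI_measure" for z
  proof (cases "R\<^sup>2 < energy \<delta> z")
    case True
    then obtain k where k: "(2 ^ k * R)\<^sup>2 < energy \<delta> z" "energy \<delta> z \<le> (2 ^ (k + 1) * R)\<^sup>2"
      using dyadic_shell_exists assms by blast
    have "energy \<delta> z powr (1 - q / 2) \<le> ((2 ^ k * R)\<^sup>2) powr (1 - q / 2)"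
      using k assms by (intro powr_mono2') auto
    also have "\<dots> = c k"
      using assms by (simp add: c_def power2_powr right_diff_distrib)
    finally have "ennreal (indicator {z. R\<^sup>2 < energy \<delta> z} z * energy \<delta> z powr (1 - q / 2))
        \<le> ennreal (c k) * indicator (B k) z"
      using True k z by (simp add: B_def ennreal_leI)
    also have "\<dots> \<le> (\<Sum>k. ennreal (c k) * indicator (B k) z)"
      by (rule ennreal_term_le_suminf)
    finally show ?thesis .
  qed simp
  have "(\<integral>\<^sup>+z. ennreal (indicator {z. R\<^sup>2 < energy \<delta> z} z * energy \<delta> z powr (1 - q / 2)) \<partial>vI_measure)
      \<le> (\<integral>\<^sup>+z. (\<Sum>k. ennreal (c k) * indicator (B k) z) \<partial>vI_measure)"
    by (intro nn_integral_mono dyadic)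
  also have "\<dots> = (\<Sum>k. \<integral>\<^sup>+z. ennreal (c k) * indicator (B k) z \<partial>vI_measure)"
    by (rule nn_integral_suminf) measurable
  also have "\<dots> = (\<Sum>k. ennreal (c k) * emeasure vI_measure (B k))"
    by (simp add: nn_integral_cmult_indicator)
  also have "\<dots> \<le> (\<Sum>k. ennreal (a * \<theta> ^ k))"
  proof (intro suminf_le summableI)
    fix k
    have "ennreal (c k) * emeasure vI_measure (B k)
        \<le> ennreal (c k) * ennreal (unit_ball_vol 3 * (2 ^ (k + 1) * R) powr (3 + \<delta>))"
      unfolding B_def using assms by (intro mult_left_mono emeasure_energy_sublevel_le) auto
    also have "\<dots> = ennreal (a * \<theta> ^ k)"
      using assms dyadic_weight_eq[of R k q \<delta>]
      by (simp add: c_def a_def \<theta>_def ennreal_mult[symmetric] mult_ac)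
    finally show "ennreal (c k) * emeasure vI_measure (B k) \<le> ennreal (a * \<theta> ^ k)" .
  qed
  also have "\<dots> = ennreal (a / (1 - \<theta>))"
    using \<theta> a by (subst suminf_ennreal2) (auto intro!: summable_mult summable_geometric
        simp: suminf_mult suminf_geometric divide_inverse)
  also have "a / (1 - \<theta>) = tail_const \<delta> q * R powr (5 + \<delta> - q)"
    by (simp add: a_def \<theta>_def tail_const_def)
  finally show ?thesis .
qed

lemma tail_const_nonneg:
  assumes "q > 5 + \<delta>"
  shows "tail_const \<delta> q \<ge> 0"
proof -
  have "(2::real) powr (5 + \<delta> - q) < 2 powr 0" using assms by (intro powr_less_mono) auto
  then show ?thesis unfolding tail_const_def by (intro divide_nonneg_pos mult_nonneg_nonneg) auto
qed

lemma energy_tail_integrable: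
  assumes "\<delta> > 0" "q > 5 + \<delta>" "R > 0"
  shows "integrable vI_measure (\<lambda>z. indicator {z. R\<^sup>2 < energy \<delta> z} z * energy \<delta> z powr (1 - q / 2))"
  using nn_integral_energy_tail_le[OF assms]
  by (intro integrableI_nonneg) (auto simp: top.not_eq_extremum intro: le_less_trans)

lemma integral_energy_tail_le:
  assumes "\<delta> > 0" "q > 5 + \<delta>" "R > 0"
  shows "(\<integral>z. indicator {z. R\<^sup>2 < energy \<delta> z} z * energy \<delta> z powr (1 - q / 2) \<partial>vI_measure)
           \<le> tail_const \<delta> q * R powr (5 + \<delta> - q)"
  using nn_integral_energy_tail_le[OF assms] tail_const_nonneg[OF assms(2)]
  by (subst (asm) nn_integral_eq_integral[OF energy_tail_integrable[OF assms]]) auto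

section \<open>Moments of a velocity slice with polynomial decay\<close>

lemma mult_le_of_decay:
  fixes w a N p :: real
  assumes "w > 0" "0 \<le> a" "p \<ge> 0" "a * (1 + w) powr p \<le> N"
  shows "w * a \<le> N * w powr (1 - p)"
proof -
  have "w powr p \<le> (1 + w) powr p" using assms by (intro powr_mono2) auto
  then have "a * w powr p \<le> a * (1 + w) powr p" using assms(2) by (rule mult_left_mono)
  then have "a * w powr p \<le> N" using assms(4) by linarith
  then have "w powr (1 - p) * (a * w powr p) \<le> w powr (1 - p) * N" by (simp add: mult_left_mono)
  moreover have "w powr (1 - p) * w powr p = w" using assms by (simp flip: powr_add)
  ultimately show ?thesis by (simp add: mult_ac)
qed

lemma norm_le_amgm:
  fixes v :: "'a::real_normed_vector"
  assumes "R > 0"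
  shows "norm v \<le> R / 2 + (norm v)\<^sup>2 / (2 * R)"
proof -
  have "2 * R * norm v \<le> R\<^sup>2 + (norm v)\<^sup>2"
    using zero_le_power2[of "norm v - R"] by (simp add: power2_diff algebra_simps)
  then show ?thesis using assms by (simp add: field_simps power2_eq_square)
qed

lemma norm_diff_power2_le: "(norm (a - b))\<^sup>2 \<le> 2 * (norm a)\<^sup>2 + 2 * (norm (b :: 'a::real_normed_vector))\<^sup>2"
proof -
  have "(norm (a - b))\<^sup>2 \<le> (norm a + norm b)\<^sup>2"
    using norm_triangle_ineq4[of a b] by (intro power_mono) auto
  also have "\<dots> \<le> 2 * (norm a)\<^sup>2 + 2 * (norm b)\<^sup>2"
    using zero_le_power2[of "norm a - norm b"] by (simp add: power2_sum power2_diff algebra_simps)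
  finally show ?thesis .
qed

text \<open>Here g is the slice (v, I) \<mapsto> f x v I of a distribution at a fixed point x.\<close>

context
  fixes \<delta> q N :: real and g :: "(real^3) \<times> real \<Rightarrow> real"
  assumes \<delta>_pos: "\<delta> > 0" and q_gt: "q > 5 + \<delta>" and N_pos: "N > 0"
    and g_nonneg: "\<And>z. z \<in> space vI_measure \<Longrightarrow> 0 \<le> g z"
    and g_decay: "AE z in vI_measure. g z * (1 + energy \<delta> z) powr (q / 2) \<le> N"
    and mass_pos: "(\<integral>z. g z \<partial>vI_measure) > 0"
begin

lemma mass_integrable: "integrable vI_measure g"
  using mass_pos not_integrable_integral_eq by force

lemma mass_measurable [measurable]: "g \<in> borel_measurable vI_measure"
  using mass_integrable by blast

lemma energy_moment_split:
  assumes "R > 0"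
  shows "AE z in vI_measure. energy \<delta> z * g z
           \<le> R\<^sup>2 * g z + N * (indicator {z. R\<^sup>2 < energy \<delta> z} z * energy \<delta> z powr (1 - q / 2))"
  using g_decay AE_space
proof eventually_elim
  case (elim z)
  show ?case
  proof (cases "R\<^sup>2 < energy \<delta> z")
    case True
    moreover have "0 < R\<^sup>2" using assms by simp
    ultimately have "energy \<delta> z > 0" by linarith
    then have "energy \<delta> z * g z \<le> N * energy \<delta> z powr (1 - q / 2)"
      using elim g_nonneg q_gt \<delta>_pos by (intro mult_le_of_decay) auto
    then show ?thesis using True elim g_nonneg by (simp add: add_increasing)
  next
    case False
    then show ?thesis using elim g_nonneg by (simp add: mult_right_mono)
  qed
qed

lemma thermal_moment_le:
  assumes "integrable vI_measure (\<lambda>z. energy \<delta> z * g z)"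
  shows "(\<integral>z. ((norm (fst z - U))\<^sup>2 / 2 + snd z powr (2 / \<delta>)) * g z \<partial>vI_measure)
           \<le> (\<integral>z. energy \<delta> z * g z \<partial>vI_measure) + (norm U)\<^sup>2 * (\<integral>z. g z \<partial>vI_measure)"
proof -
  have "(\<integral>z. ((norm (fst z - U))\<^sup>2 / 2 + snd z powr (2 / \<delta>)) * g z \<partial>vI_measure)
      \<le> (\<integral>z. energy \<delta> z * g z + (norm U)\<^sup>2 * g z \<partial>vI_measure)"
  proof (rule integral_mono')
    fix z assume z: "z \<in> space vI_measure"
    have "(norm (fst z - U))\<^sup>2 / 2 + snd z powr (2 / \<delta>) \<le> energy \<delta> z + (norm U)\<^sup>2"
      using norm_diff_power2_le[of "fst z" U] by (simp add: energy_def)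
    then show "((norm (fst z - U))\<^sup>2 / 2 + snd z powr (2 / \<delta>)) * g z
        \<le> energy \<delta> z * g z + (norm U)\<^sup>2 * g z"
      using g_nonneg[OF z] by (simp add: mult_right_mono flip: distrib_right)
    show "0 \<le> energy \<delta> z * g z + (norm U)\<^sup>2 * g z"
      using g_nonneg[OF z] energy_nonneg by simp
  qed (use assms mass_integrable in simp)
  also have "\<dots> = (\<integral>z. energy \<delta> z * g z \<partial>vI_measure) + (norm U)\<^sup>2 * (\<integral>z. g z \<partial>vI_measure)"
    using assms mass_integrable by simp
  finally show ?thesis .
qed

context
  fixes R :: real
  assumes R_pos: "R > 0"
    and R_balance: "N * R powr (5 + \<delta> - q) = R\<^sup>2 * (\<integral>z. g z \<partial>vI_measure)"
begin

lemma energy_moment_integrable: "integrable vI_measure (\<lambda>z. energy \<delta> z * g z)"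
proof (rule Bochner_Integration.integrable_bound)
  show "integrable vI_measure (\<lambda>z. R\<^sup>2 * g z
      + N * (indicator {z. R\<^sup>2 < energy \<delta> z} z * energy \<delta> z powr (1 - q / 2)))"
    using mass_integrable energy_tail_integrable[OF \<delta>_pos q_gt R_pos] by simp
  show "AE z in vI_measure. norm (energy \<delta> z * g z) \<le> norm (R\<^sup>2 * g z
      + N * (indicator {z. R\<^sup>2 < energy \<delta> z} z * energy \<delta> z powr (1 - q / 2)))"
    using energy_moment_split[OF R_pos] AE_space
  proof eventually_elim
    case (elim z)
    have "norm (energy \<delta> z * g z) = energy \<delta> z * g z"
      using g_nonneg[OF elim(2)] energy_nonneg by simp
    with elim(1) show ?case by (smt (verit) norm_ge_zero real_norm_def)
  qed
qed simp

lemma energy_moment_le: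
  "(\<integral>z. energy \<delta> z * g z \<partial>vI_measure) \<le> (1 + tail_const \<delta> q) * R\<^sup>2 * (\<integral>z. g z \<partial>vI_measure)"
proof -
  let ?tail = "\<lambda>z. indicator {z. R\<^sup>2 < energy \<delta> z} z * energy \<delta> z powr (1 - q / 2)"
  have "(\<integral>z. energy \<delta> z * g z \<partial>vI_measure) \<le> (\<integral>z. R\<^sup>2 * g z + N * ?tail z \<partial>vI_measure)"
    using mass_integrable energy_tail_integrable[OF \<delta>_pos q_gt R_pos]
    by (intro integral_mono_AE energy_moment_integrable energy_moment_split R_pos) auto
  also have "\<dots> = R\<^sup>2 * (\<integral>z. g z \<partial>vI_measure) + N * (\<integral>z. ?tail z \<partial>vI_measure)"
    using mass_integrable energy_tail_integrable[OF \<delta>_pos q_gt R_pos] by simp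
  also have "\<dots> \<le> R\<^sup>2 * (\<integral>z. g z \<partial>vI_measure) + N * (tail_const \<delta> q * R powr (5 + \<delta> - q))"
    using integral_energy_tail_le[OF \<delta>_pos q_gt R_pos] N_pos by simp
  also have "\<dots> = (1 + tail_const \<delta> q) * R\<^sup>2 * (\<integral>z. g z \<partial>vI_measure)"
    using R_balance by (simp add: algebra_simps)
  finally show ?thesis .
qed

lemma first_moment_le:
  "norm (\<integral>z. g z *\<^sub>R fst z \<partial>vI_measure) \<le> (2 + tail_const \<delta> q) * R / 2 * (\<integral>z. g z \<partial>vI_measure)"
proof -
  have "norm (\<integral>z. g z *\<^sub>R fst z \<partial>vI_measure) \<le> (\<integral>z. norm (g z *\<^sub>R fst z) \<partial>vI_measure)"
    by (rule integral_norm_bound)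
  also have "\<dots> \<le> (\<integral>z. R / 2 * g z + energy \<delta> z * g z / (2 * R) \<partial>vI_measure)"
  proof (rule integral_mono')
    fix z assume z: "z \<in> space vI_measure"
    have "(norm (fst z))\<^sup>2 / (2 * R) \<le> energy \<delta> z / (2 * R)"
      using norm_fst_power2_le_energy R_pos by (intro divide_right_mono) auto
    then have "norm (fst z) \<le> R / 2 + energy \<delta> z / (2 * R)"
      using norm_le_amgm[OF R_pos, of "fst z"] by linarith
    then have "g z * norm (fst z) \<le> g z * (R / 2 + energy \<delta> z / (2 * R))"
      using g_nonneg[OF z] by (rule mult_left_mono)
    then show "norm (g z *\<^sub>R fst z) \<le> R / 2 * g z + energy \<delta> z * g z / (2 * R)"
      using g_nonneg[OF z] by (simp add: algebra_simps)
    show "0 \<le> R / 2 * g z + energy \<delta> z * g z / (2 * R)"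
      using g_nonneg[OF z] energy_nonneg R_pos by simp
  qed (use mass_integrable energy_moment_integrable in simp)
  also have "\<dots> = R / 2 * (\<integral>z. g z \<partial>vI_measure) + (\<integral>z. energy \<delta> z * g z \<partial>vI_measure) / (2 * R)"
    using mass_integrable energy_moment_integrable by simp
  also have "\<dots> \<le> R / 2 * (\<integral>z. g z \<partial>vI_measure) + (1 + tail_const \<delta> q) * R\<^sup>2 * (\<integral>z. g z \<partial>vI_measure) / (2 * R)"
    using energy_moment_le R_pos by (simp add: divide_right_mono)
  also have "\<dots> = (2 + tail_const \<delta> q) * R / 2 * (\<integral>z. g z \<partial>vI_measure)"
    using R_pos by (simp add: field_simps power2_eq_square)
  finally show ?thesis .
qed

lemma temperature_velocity_le:
  defines "\<rho> \<equiv> \<integral>z. g z \<partial>vI_measure"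
    and "U \<equiv> (1 / (\<integral>z. g z \<partial>vI_measure)) *\<^sub>R (\<integral>z. g z *\<^sub>R fst z \<partial>vI_measure)"
  shows "2 / ((3 + \<delta>) * \<rho>) * (\<integral>z. ((norm (fst z - U))\<^sup>2 / 2 + snd z powr (2 / \<delta>)) * g z \<partial>vI_measure)
           + (norm U)\<^sup>2 \<le> (1 + tail_const \<delta> q + (2 + tail_const \<delta> q)\<^sup>2 / 2) * R\<^sup>2"
proof -
  let ?K = "tail_const \<delta> q"
  have \<rho>: "\<rho> > 0" using mass_pos by (simp add: \<rho>_def)
  have "norm U \<le> (2 + ?K) * R / 2"
    using first_moment_le \<rho> by (simp add: U_def \<rho>_def field_simps)
  then have "(norm U)\<^sup>2 \<le> ((2 + ?K) * R / 2)\<^sup>2" by (rule power_mono) simp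
  then have U: "(norm U)\<^sup>2 \<le> (2 + ?K)\<^sup>2 / 4 * R\<^sup>2" by (simp add: power_mult_distrib power_divide)
  have "2 / ((3 + \<delta>) * \<rho>) * (\<integral>z. ((norm (fst z - U))\<^sup>2 / 2 + snd z powr (2 / \<delta>)) * g z \<partial>vI_measure)
      \<le> 2 / ((3 + \<delta>) * \<rho>) * (((1 + ?K) * R\<^sup>2 + (norm U)\<^sup>2) * \<rho>)"
    using thermal_moment_le[OF energy_moment_integrable, of U] energy_moment_le \<rho> \<delta>_pos
    unfolding \<rho>_def by (intro mult_left_mono) (auto simp: algebra_simps)
  also have "\<dots> = 2 / (3 + \<delta>) * ((1 + ?K) * R\<^sup>2 + (norm U)\<^sup>2)"
    using \<rho> \<delta>_pos by simp
  also have "\<dots> \<le> (1 + ?K) * R\<^sup>2 + (norm U)\<^sup>2"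
    using \<delta>_pos tail_const_nonneg[OF q_gt] by (intro mult_left_le_one_le) auto
  finally show ?thesis using U by (simp add: algebra_simps)
qed

end

end

section \<open>From the phase space to velocity slices\<close>

definition moment_const :: "real \<Rightarrow> real \<Rightarrow> real" where
  "moment_const \<delta> q = (1 + tail_const \<delta> q + (2 + tail_const \<delta> q)\<^sup>2 / 2) powr ((q - \<delta> - 3) / 2)"

lemma moment_estimate_at:
  fixes f :: "real^3 \<Rightarrow> real^3 \<Rightarrow> real \<Rightarrow> real"
  assumes \<delta>: "\<delta> > 0" and q: "q > 5 + \<delta>" and N: "N > 0"
    and nonneg: "\<And>v I. I > 0 \<Longrightarrow> 0 \<le> f x v I"
    and decay: "AE z in vI_measure. f x (fst z) (snd z) * (1 + energy \<delta> z) powr (q / 2) \<le> N"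
    and \<rho>: "dens f x > 0"
  shows "dens f x * (temp \<delta> f x + (norm (bulk_vel f x))\<^sup>2) powr ((q - \<delta> - 3) / 2)
           \<le> moment_const \<delta> q * N"
proof -
  define g where "g z = f x (fst z) (snd z)" for z
  define e where "e = (q - \<delta> - 3) / 2"
  define c where "c = 1 + tail_const \<delta> q + (2 + tail_const \<delta> q)\<^sup>2 / 2"
  define R where "R = (N / dens f x) powr (1 / (2 * e))"
  have e: "e > 0" using q by (simp add: e_def)
  have c: "c > 0" unfolding c_def using tail_const_nonneg[OF q] by (intro add_pos_nonneg) auto
  have mass: "dens f x = (\<integral>z. g z \<partial>vI_measure)"
    by (simp add: dens_def g_def case_prod_beta')
  have g: "0 \<le> g z" if "z \<in> space vI_measure" for z
    using that nonneg by (auto simp: g_def space_vI_measure)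
  note slice = \<delta> q N g decay[folded g_def] \<rho>[unfolded mass]
  have R: "R > 0" using N \<rho> by (simp add: R_def)
  have R_pow: "R powr (2 * e) = N / dens f x"
  proof -
    have "1 / (2 * e) * (2 * e) = 1" using e by simp
    then show ?thesis using N \<rho> by (simp add: R_def powr_powr)
  qed
  have R_balance: "N * R powr (5 + \<delta> - q) = R\<^sup>2 * (\<integral>z. g z \<partial>vI_measure)"
  proof -
    have "2 * e = q - \<delta> - 3" by (simp add: e_def)
    then have "5 + \<delta> - q = 2 - 2 * e" by linarith
    then have "R powr (5 + \<delta> - q) = R\<^sup>2 / (N / dens f x)"
      using R by (simp only: powr_diff R_pow) simp
    then show ?thesis using N \<rho> by (simp add: mass)
  qed
  have "temp \<delta> f x + (norm (bulk_vel f x))\<^sup>2 \<le> c * R\<^sup>2"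
    using temperature_velocity_le[OF slice R R_balance]
    by (simp add: c_def temp_def bulk_vel_def mass g_def case_prod_beta')
  moreover have "0 \<le> temp \<delta> f x"
    unfolding temp_def using \<rho> \<delta> nonneg
    by (intro mult_nonneg_nonneg integral_nonneg_AE AE_I2) (auto simp: space_vI_measure)
  ultimately have "dens f x * (temp \<delta> f x + (norm (bulk_vel f x))\<^sup>2) powr e
      \<le> dens f x * (c * R\<^sup>2) powr e"
    using \<rho> e by (intro mult_left_mono powr_mono2) auto
  also have "\<dots> = c powr e * (dens f x * R powr (2 * e))"
    using c R by (simp add: powr_mult power2_powr)
  also have "\<dots> = moment_const \<delta> q * N"
    using R_pow \<rho> by (simp add: moment_const_def c_def e_def)
  finally show ?thesis by (simp add: e_def)
qed

lemma torus_sets_lborel [measurable]: "torus \<in> sets lborel"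
  unfolding torus_def by measurable

lemma AE_phase_measure_slices:
  assumes "AE z in phase_measure. P (fst z) (snd z)"
  shows "AE x in torus_measure. AE y in vI_measure. P x y"
proof -
  let ?S = "UNIV \<times> {0<..} :: ((real^3) \<times> real) set"
  have "torus \<times> ?S \<in> sets (lborel \<Otimes>\<^sub>M lborel)"
    using vI_domain_sets_lborel torus_sets_lborel by (intro pair_measureI) auto
  then have "torus \<times> ?S \<in> sets lborel" by (simp only: lborel_prod)
  then have "AE z in lborel. z \<in> torus \<times> ?S \<longrightarrow> P (fst z) (snd z)"
    using assms unfolding phase_measure_def by (subst (asm) AE_restrict_space_iff) auto
  then have "AE z in lborel \<Otimes>\<^sub>M lborel. z \<in> torus \<times> ?S \<longrightarrow> P (fst z) (snd z)"
    by (simp only: lborel_prod)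
  moreover have "pair_sigma_finite lborel lborel"
    by (simp add: pair_sigma_finite_def lborel.sigma_finite_measure_axioms)
  ultimately have "AE x in lborel. AE y in lborel. (x, y) \<in> torus \<times> ?S \<longrightarrow> P x y"
    using pair_sigma_finite.AE_pair by fastforce
  then have "AE x in lborel. x \<in> torus \<longrightarrow> (AE y in vI_measure. P x y)"
    unfolding vI_measure_def
    by eventually_elim (use vI_domain_sets_lborel in \<open>auto simp: AE_restrict_space_iff\<close>)
  then show ?thesis
    unfolding torus_measure_def using torus_sets_lborel by (subst AE_restrict_space_iff) auto
qed

lemma AE_slice_decay:
  fixes f :: "real^3 \<Rightarrow> real^3 \<Rightarrow> real \<Rightarrow> real"
  assumes norm: "Lq_norm \<delta> q f = ereal N"
    and nonneg: "\<And>x v I. x \<in> torus \<Longrightarrow> I > 0 \<Longrightarrow> 0 \<le> f x v I"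
  shows "AE x in torus_measure. (\<forall>v I. I > 0 \<longrightarrow> 0 \<le> f x v I) \<and>
           (AE z in vI_measure. f x (fst z) (snd z) * (1 + energy \<delta> z) powr (q / 2) \<le> N)"
proof -
  have "AE z in phase_measure. (\<lambda>(x, v, I).
      ereal (\<bar>f x v I\<bar> * (1 + (norm v)\<^sup>2 + I powr (2 / \<delta>)) powr (q / 2))) z \<le> Lq_norm \<delta> q f"
    unfolding Lq_norm_def by (rule esssup_AE)
  then have "AE z in phase_measure.
      \<bar>f (fst z) (fst (snd z)) (snd (snd z))\<bar> * (1 + energy \<delta> (snd z)) powr (q / 2) \<le> N"
    by (rule eventually_mono) (auto simp: norm energy_def case_prod_beta' add.assoc)
  then have "AE x in torus_measure. AE z in vI_measure.
      \<bar>f x (fst z) (snd z)\<bar> * (1 + energy \<delta> z) powr (q / 2) \<le> N"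
    by (rule AE_phase_measure_slices)
  moreover have "AE x in torus_measure. x \<in> torus"
    using AE_space[of torus_measure] by (simp add: torus_measure_def space_restrict_space)
  ultimately show ?thesis
  proof eventually_elim
    case (elim x)
    have "AE z in vI_measure. f x (fst z) (snd z) * (1 + energy \<delta> z) powr (q / 2) \<le> N"
      using elim(1) AE_space
      by eventually_elim (use nonneg[OF elim(2)] in \<open>auto simp: space_vI_measure\<close>)
    then show ?case using nonneg[OF elim(2)] by auto
  qed
qed

theorem lemma3p3:
  fixes \<delta> q :: real
  assumes "\<delta> > 0" and "q > 5 + \<delta>"
  shows "\<exists>C>0. \<forall>f :: real^3 \<Rightarrow> real^3 \<Rightarrow> real \<Rightarrow> real.
           (\<lambda>(x, v, I). f x v I) \<in> borel_measurable phase_measure \<and>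
           (\<forall>x v I. x \<in> torus \<and> I > 0 \<longrightarrow> 0 \<le> f x v I) \<and>
           0 < Lq_norm \<delta> q f \<and> Lq_norm \<delta> q f < \<infinity>
           \<longrightarrow> (AE x in torus_measure. dens f x > 0 \<longrightarrow>
                 dens f x * (temp \<delta> f x + (norm (bulk_vel f x))\<^sup>2) powr ((q - \<delta> - 3) / 2)
                   \<le> C * real_of_ereal (Lq_norm \<delta> q f))"
proof (intro exI[of _ "moment_const \<delta> q"] conjI allI impI)
  have "1 + tail_const \<delta> q + (2 + tail_const \<delta> q)\<^sup>2 / 2 > 0"
    using tail_const_nonneg[OF assms(2)] by (intro add_pos_nonneg) auto
  then show "moment_const \<delta> q > 0" by (simp add: moment_const_def)
  fix f :: "real^3 \<Rightarrow> real^3 \<Rightarrow> real \<Rightarrow> real"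
  assume "(\<lambda>(x, v, I). f x v I) \<in> borel_measurable phase_measure \<and>
    (\<forall>x v I. x \<in> torus \<and> I > 0 \<longrightarrow> 0 \<le> f x v I) \<and> 0 < Lq_norm \<delta> q f \<and> Lq_norm \<delta> q f < \<infinity>"
  then have nonneg: "\<And>x v I. x \<in> torus \<Longrightarrow> I > 0 \<Longrightarrow> 0 \<le> f x v I"
    and pos: "0 < Lq_norm \<delta> q f" and fin: "Lq_norm \<delta> q f < \<infinity>" by auto
  define N where "N = real_of_ereal (Lq_norm \<delta> q f)"
  have LN: "Lq_norm \<delta> q f = ereal N" and N: "N > 0"
    using pos fin unfolding N_def by (cases "Lq_norm \<delta> q f"; auto)+
  have "AE x in torus_measure. (\<forall>v I. I > 0 \<longrightarrow> 0 \<le> f x v I) \<and>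
      (AE z in vI_measure. f x (fst z) (snd z) * (1 + energy \<delta> z) powr (q / 2) \<le> N)"
    by (rule AE_slice_decay[OF LN]) (rule nonneg)
  then show "AE x in torus_measure. dens f x > 0 \<longrightarrow>
      dens f x * (temp \<delta> f x + (norm (bulk_vel f x))\<^sup>2) powr ((q - \<delta> - 3) / 2)
        \<le> moment_const \<delta> q * real_of_ereal (Lq_norm \<delta> q f)"
    by eventually_elim (use N in \<open>auto simp: LN intro: moment_estimate_at[OF assms]\<close>)
qed

end
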